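(* Let $\mu$ be a probability measure on $[0,\infty)$ with $\mu(\{0\})<1$, and let $p\in\mathbb N$. Then $m_p(\mu)=\int_{[0,\infty)}x^p\,\mu(dx)<\infty$ if and only if there exist real numbers $r_1,\dots,r_p$ such that $$\frac1x K_\mu(-x)=-r_1+r_2x+\dots+(-1)^p r_p x^{p-1}+o(x^{p-1})\quad\text{as } x\downarrow 0,\ x>0.$$
   Context: For a probability measure $\mu$ on $[0,\infty)$ with $\mu(\{0\})<1$, define $\psi_\mu(z)=\int_{[0,\infty)}\frac{z\xi}{1-z\xi}\,\mu(d\xi)$ for $z\in\mathbb C\setminus[0,\infty)$, and $K_\mu(z)=\psi_\mu(z)/(1+\psi_\mu(z))$. *)

theory Defs
  imports "HOL-Probability.Probability" "HOL-Library.Landau_Symbols"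
begin

text \<open>A probability measure on [0,\<infinity>) is modelled as a probability measure M on the
Borel sets of the reals that is concentrated on [0,\<infinity>).\<close>

definition psi_mu :: "real measure \<Rightarrow> complex \<Rightarrow> complex" where
  "psi_mu M z = (\<integral>\<xi>. z * complex_of_real \<xi> / (1 - z * complex_of_real \<xi>) \<partial>M)"

definition K_mu :: "real measure \<Rightarrow> complex \<Rightarrow> complex" where
  "K_mu M z = psi_mu M z / (1 + psi_mu M z)"

definition moment :: "real measure \<Rightarrow> nat \<Rightarrow> ennreal" where
  "moment M p = (\<integral>\<^sup>+ x. ennreal (x ^ p) \<partial>M)"

end

theory Submission
  imports Defs "HOL-Computational_Algebra.Polynomial"
begin

text \<open>
  For \<open>x > 0\<close> put \<open>C\<^sub>j(x) = \<integral> \<xi>\<^sup>j / (1 + x\<xi>) d\<mu>\<close>. Then \<open>\<psi>\<^sub>\<mu>(-x) = -x C\<^sub>1(x)\<close>, so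
  \<open>K\<^sub>\<mu>(-x) / x = -C\<^sub>1 / (1 - x C\<^sub>1)\<close>. The Moebius map \<open>G \<mapsto> -G / (1 - x G)\<close> is an involution
  and preserves the existence of a polynomial expansion of order \<open>n\<close> at \<open>0\<^sup>+\<close>, so the
  right-hand side says exactly that \<open>C\<^sub>1\<close> has such an expansion of order \<open>p - 1\<close>.

  Iterating \<open>1 / (1 + x\<xi>) = 1 - x\<xi> / (1 + x\<xi>)\<close> gives
  \<open>C\<^sub>1(x) = (\<Sum>k<n. (-x)\<^sup>k m\<^sub>k\<^sub>+\<^sub>1) + (-x)\<^sup>n C\<^sub>n\<^sub>+\<^sub>1(x)\<close> whenever \<open>m\<^sub>1, \<dots>, m\<^sub>n\<close> are finite.
  If \<open>m\<^sub>p < \<infinity>\<close>, dominated convergence gives \<open>C\<^sub>p(x) \<rightarrow> m\<^sub>p\<close>, which is the expansion.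
  Conversely, if \<open>m\<^sub>1, \<dots>, m\<^sub>j\<close> are finite, the expansion and \<open>x C\<^sub>j\<^sub>+\<^sub>1(x) \<rightarrow> 0\<close> force
  \<open>x\<^sup>j C\<^sub>j\<^sub>+\<^sub>1(x) = O(x\<^sup>j)\<close>; so \<open>C\<^sub>j\<^sub>+\<^sub>1\<close> stays bounded as \<open>x \<down> 0\<close> and Fatou's lemma gives
  \<open>m\<^sub>j\<^sub>+\<^sub>1 < \<infinity>\<close>.
\<close>

section \<open>Polynomial expansions at \<open>0\<^sup>+\<close>\<close>

lemma power_bigo_power_at_right_0:
  assumes "m \<le> n"
  shows "(\<lambda>x::real. x ^ n) \<in> O[at_right 0](\<lambda>x. x ^ m)"
proof (rule bigoI[of _ 1])
  have "eventually (\<lambda>x::real. x \<in> {0<..<1}) (at_right 0)"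
    by (rule eventually_at_right_real) simp
  then show "eventually (\<lambda>x::real. norm (x ^ n) \<le> 1 * norm (x ^ m)) (at_right 0)"
  proof eventually_elim
    case (elim x)
    then show ?case using power_decreasing[OF assms, of x] by simp
  qed
qed

lemma power_Suc_smallo_power_at_right_0:
  "(\<lambda>x::real. x ^ Suc n) \<in> o[at_right 0](\<lambda>x. x ^ n)"
proof (rule smalloI_tendsto)
  have "eventually (\<lambda>x::real. x ^ Suc n / x ^ n = x) (at_right 0)"
    using eventually_at_right_less[of 0] by eventually_elim auto
  then show "((\<lambda>x::real. x ^ Suc n / x ^ n) \<longlongrightarrow> 0) (at_right 0)"
    by (rule tendsto_cong[THEN iffD2]) (rule tendsto_ident_at)
  show "eventually (\<lambda>x::real. x ^ n \<noteq> 0) (at_right 0)"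
    using eventually_at_right_less[of 0] by eventually_elim auto
qed

lemma smallo_power_mono_at_right_0:
  "m \<le> n \<Longrightarrow> f \<in> o[at_right 0](\<lambda>x. x ^ n) \<Longrightarrow> f \<in> o[at_right 0](\<lambda>x::real. x ^ m)"
  using landau_o.small_big_trans power_bigo_power_at_right_0 by blast

lemma poly_tendsto_at_right_0: "(poly q \<longlongrightarrow> poly q 0) (at_right (0::real))"
  by (rule tendsto_within_subset[OF _ subset_UNIV]) (simp add: isCont_def[symmetric])

lemma tendsto_imp_bigo_1: "(f \<longlongrightarrow> (c::real)) F \<Longrightarrow> f \<in> O[F](\<lambda>_. 1)"
  by (rule bigoI_tendsto[where c = c]) simp_all

lemma poly_bigo_1_at_right_0: "poly q \<in> O[at_right (0::real)](\<lambda>_. 1)"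
  by (rule tendsto_imp_bigo_1[OF poly_tendsto_at_right_0])

definition has_poly_expansion :: "nat \<Rightarrow> (real \<Rightarrow> real) \<Rightarrow> bool" where
  "has_poly_expansion n f \<longleftrightarrow> (\<exists>q. (\<lambda>x. f x - poly q x) \<in> o[at_right 0](\<lambda>x. x ^ n))"

lemma has_poly_expansion_poly: "has_poly_expansion n (poly q)"
  unfolding has_poly_expansion_def by (intro exI[of _ q]) simp

lemma has_poly_expansion_const: "has_poly_expansion n (\<lambda>_. c)"
proof -
  have "poly [:c:] = (\<lambda>_. c)" by (simp add: fun_eq_iff)
  then show ?thesis using has_poly_expansion_poly[of n "[:c:]"] by simp
qed

lemma has_poly_expansion_ident: "has_poly_expansion n (\<lambda>x. x)"
proof -
  have "poly [:0, 1:] = (\<lambda>x::real. x)" by (simp add: fun_eq_iff)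
  then show ?thesis using has_poly_expansion_poly[of n "[:0, 1:]"] by simp
qed

lemma has_poly_expansion_smallo:
  "f \<in> o[at_right 0](\<lambda>x. x ^ n) \<Longrightarrow> has_poly_expansion n f"
  unfolding has_poly_expansion_def by (intro exI[of _ 0]) simp

lemma has_poly_expansion_cong:
  assumes "eventually (\<lambda>x. f x = g x) (at_right 0)" and "has_poly_expansion n f"
  shows "has_poly_expansion n g"
proof -
  from assms(2) obtain q where q: "(\<lambda>x. f x - poly q x) \<in> o[at_right 0](\<lambda>x. x ^ n)"
    unfolding has_poly_expansion_def by blast
  have "eventually (\<lambda>x. f x - poly q x = g x - poly q x) (at_right 0)"
    using assms(1) by eventually_elim simp
  from landau_o.small.in_cong[OF this] q show ?thesis
    unfolding has_poly_expansion_def by blast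
qed

lemma has_poly_expansion_mono:
  "m \<le> n \<Longrightarrow> has_poly_expansion n f \<Longrightarrow> has_poly_expansion m f"
  unfolding has_poly_expansion_def using smallo_power_mono_at_right_0 by blast

lemma has_poly_expansion_add:
  assumes "has_poly_expansion n f" and "has_poly_expansion n g"
  shows "has_poly_expansion n (\<lambda>x. f x + g x)"
proof -
  from assms obtain q r where
    "(\<lambda>x. f x - poly q x) \<in> o[at_right 0](\<lambda>x. x ^ n)"
    "(\<lambda>x. g x - poly r x) \<in> o[at_right 0](\<lambda>x. x ^ n)"
    unfolding has_poly_expansion_def by blast
  from sum_in_smallo(1)[OF this]
  have "(\<lambda>x. f x + g x - poly (q + r) x) \<in> o[at_right 0](\<lambda>x. x ^ n)"
    by (simp add: algebra_simps)
  then show ?thesis unfolding has_poly_expansion_def by blast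
qed

lemma has_poly_expansion_uminus:
  assumes "has_poly_expansion n f"
  shows "has_poly_expansion n (\<lambda>x. - f x)"
proof -
  from assms obtain q where "(\<lambda>x. f x - poly q x) \<in> o[at_right 0](\<lambda>x. x ^ n)"
    unfolding has_poly_expansion_def by blast
  then have "(\<lambda>x. - (f x - poly q x)) \<in> o[at_right 0](\<lambda>x. x ^ n)"
    by (subst landau_o.small.uminus_in_iff)
  then have "(\<lambda>x. - f x - poly (- q) x) \<in> o[at_right 0](\<lambda>x. x ^ n)"
    by simp
  then show ?thesis unfolding has_poly_expansion_def by blast
qed

lemma has_poly_expansion_diff:
  "has_poly_expansion n f \<Longrightarrow> has_poly_expansion n g \<Longrightarrow> has_poly_expansion n (\<lambda>x. f x - g x)"
  using has_poly_expansion_add[OF _ has_poly_expansion_uminus[of n g], of f] by simp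

lemma has_poly_expansion_bigo_1:
  assumes "has_poly_expansion n f"
  shows "f \<in> O[at_right 0](\<lambda>_. 1)"
proof -
  from assms obtain q where "(\<lambda>x. f x - poly q x) \<in> o[at_right 0](\<lambda>x. x ^ n)"
    unfolding has_poly_expansion_def by blast
  then have "(\<lambda>x. f x - poly q x) \<in> O[at_right 0](\<lambda>x. x ^ 0)"
    by (intro landau_o.small_imp_big smallo_power_mono_at_right_0[of 0 n]) simp_all
  from sum_in_bigo(1)[OF this[simplified] poly_bigo_1_at_right_0[of q]] show ?thesis by simp
qed

lemma has_poly_expansion_mult:
  assumes f: "has_poly_expansion n f" and g: "has_poly_expansion n g"
  shows "has_poly_expansion n (\<lambda>x. f x * g x)"
proof -
  from assms obtain q r where
    q: "(\<lambda>x. f x - poly q x) \<in> o[at_right 0](\<lambda>x. x ^ n)" and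
    r: "(\<lambda>x. g x - poly r x) \<in> o[at_right 0](\<lambda>x. x ^ n)"
    unfolding has_poly_expansion_def by blast
  have fg: "(\<lambda>x. (f x - poly q x) * g x) \<in> o[at_right 0](\<lambda>x. x ^ n)"
    using landau_o.small_big_mult[OF q has_poly_expansion_bigo_1[OF g]] by simp
  have qg: "(\<lambda>x. poly q x * (g x - poly r x)) \<in> o[at_right 0](\<lambda>x. x ^ n)"
    using landau_o.big_small_mult[OF poly_bigo_1_at_right_0 r] by simp
  from sum_in_smallo(1)[OF fg qg]
  have "(\<lambda>x. f x * g x - poly (q * r) x) \<in> o[at_right 0](\<lambda>x. x ^ n)"
    by (simp add: algebra_simps)
  then show ?thesis unfolding has_poly_expansion_def by blast
qed

lemma has_poly_expansion_power:
  "has_poly_expansion n f \<Longrightarrow> has_poly_expansion n (\<lambda>x. f x ^ k)"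
  by (induction k) (simp_all add: has_poly_expansion_const has_poly_expansion_mult)

lemma has_poly_expansion_sum:
  "(\<And>i. i \<in> A \<Longrightarrow> has_poly_expansion n (f i)) \<Longrightarrow> has_poly_expansion n (\<lambda>x. \<Sum>i\<in>A. f i x)"
  by (induction A rule: infinite_finite_induct)
     (simp_all add: has_poly_expansion_const has_poly_expansion_add)

lemma has_poly_expansion_mult_ident:
  assumes "has_poly_expansion n f"
  shows "has_poly_expansion (Suc n) (\<lambda>x. x * f x)"
proof -
  from assms obtain q where "(\<lambda>x. f x - poly q x) \<in> o[at_right 0](\<lambda>x. x ^ n)"
    unfolding has_poly_expansion_def by blast
  from landau_o.small.mult_left[OF this, of "\<lambda>x. x"]
  have "(\<lambda>x. x * f x - poly (pCons 0 q) x) \<in> o[at_right 0](\<lambda>x. x ^ Suc n)"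
    by (simp add: algebra_simps)
  then show ?thesis unfolding has_poly_expansion_def by blast
qed

lemma has_poly_expansion_inverse_one_minus:
  assumes u: "has_poly_expansion n u" and u_bigo: "u \<in> O[at_right 0](\<lambda>x. x)"
  shows "has_poly_expansion n (\<lambda>x. 1 / (1 - u x))"
proof -
  obtain c where "eventually (\<lambda>x. norm (u x) \<le> c * norm x) (at_right 0)"
    using u_bigo by (elim landau_o.bigE)
  moreover have "((\<lambda>x::real. c * norm x) \<longlongrightarrow> 0) (at_right 0)"
    by (intro tendsto_mult_right_zero tendsto_norm_zero tendsto_ident_at)
  ultimately have u_lim: "(u \<longlongrightarrow> 0) (at_right 0)"
    by (rule Lim_null_comparison)
  then have "eventually (\<lambda>x. dist (u x) 0 < 1) (at_right 0)"
    by (rule tendstoD) simp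
  then have u_ne_1: "eventually (\<lambda>x. u x \<noteq> 1) (at_right 0)"
    by eventually_elim auto
  have "((\<lambda>x. 1 / (1 - u x)) \<longlongrightarrow> 1 / (1 - 0)) (at_right 0)"
    by (intro tendsto_intros u_lim) simp
  then have inv_bigo: "(\<lambda>x. 1 / (1 - u x)) \<in> O[at_right 0](\<lambda>_. 1)"
    by (rule tendsto_imp_bigo_1)
  have "(\<lambda>x. u x ^ Suc n) \<in> O[at_right 0](\<lambda>x. x ^ Suc n)"
    by (rule landau_o.big_power[OF u_bigo])
  then have "(\<lambda>x. u x ^ Suc n) \<in> o[at_right 0](\<lambda>x. x ^ n)"
    using landau_o.big_small_trans power_Suc_smallo_power_at_right_0 by blast
  from landau_o.small_big_mult[OF this inv_bigo]
  have remainder: "(\<lambda>x. u x ^ Suc n * (1 / (1 - u x))) \<in> o[at_right 0](\<lambda>x. x ^ n)"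
    by simp
  have "eventually (\<lambda>x. (\<Sum>k<Suc n. u x ^ k) + u x ^ Suc n * (1 / (1 - u x))
      = 1 / (1 - u x)) (at_right 0)"
    using u_ne_1
  proof eventually_elim
    case (elim x)
    then have "1 - u x \<noteq> 0" by simp
    then show ?case by (simp add: sum_gp_strict field_simps)
  qed
  moreover have "has_poly_expansion n (\<lambda>x. (\<Sum>k<Suc n. u x ^ k) + u x ^ Suc n * (1 / (1 - u x)))"
    by (intro has_poly_expansion_add has_poly_expansion_sum has_poly_expansion_power u
        has_poly_expansion_smallo[OF remainder])
  ultimately show ?thesis
    by (rule has_poly_expansion_cong)
qed

lemma has_poly_expansion_moebius:
  assumes G: "has_poly_expansion n G"
  shows "has_poly_expansion n (\<lambda>x. - G x / (1 - x * G x))"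
proof -
  have "has_poly_expansion n (\<lambda>x. x * G x)"
    by (rule has_poly_expansion_mono[OF _ has_poly_expansion_mult_ident[OF G]]) simp
  moreover have "(\<lambda>x. x * G x) \<in> O[at_right 0](\<lambda>x. x)"
    using landau_o.big.mult_left[OF has_poly_expansion_bigo_1[OF G], of "\<lambda>x. x"] by simp
  ultimately have "has_poly_expansion n (\<lambda>x. - G x * (1 / (1 - x * G x)))"
    by (intro has_poly_expansion_mult[OF has_poly_expansion_uminus[OF G]]
        has_poly_expansion_inverse_one_minus)
  then show ?thesis
    by (rule has_poly_expansion_cong[rotated]) simp
qed

lemma has_poly_expansion_moebius_iff:
  assumes "eventually (\<lambda>x. x * G x \<noteq> 1) (at_right 0)"
  shows "has_poly_expansion n (\<lambda>x. - G x / (1 - x * G x)) \<longleftrightarrow> has_poly_expansion n G"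
proof
  assume "has_poly_expansion n (\<lambda>x. - G x / (1 - x * G x))"
  from has_poly_expansion_moebius[OF this] show "has_poly_expansion n G"
  proof (rule has_poly_expansion_cong[rotated])
    show "eventually (\<lambda>x. - (- G x / (1 - x * G x)) / (1 - x * (- G x / (1 - x * G x))) = G x)
      (at_right 0)"
      using assms by eventually_elim (simp add: field_simps)
  qed
qed (rule has_poly_expansion_moebius)

lemma poly_factor_ident_if_smallo_1:
  assumes "poly q \<in> o[at_right 0](\<lambda>_. 1)"
  obtains q' where "poly q = (\<lambda>x::real. x * poly q' x)"
proof -
  have "((\<lambda>x. poly q x / 1) \<longlongrightarrow> 0) (at_right 0)"
    by (rule smalloD_tendsto[OF assms])
  then have "poly q 0 = 0"
    using tendsto_unique[OF _ poly_tendsto_at_right_0] by simp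
  moreover obtain a q' where "q = pCons a q'"
    by (cases q)
  ultimately show ?thesis
    using that[of q'] by (simp add: fun_eq_iff)
qed

lemma poly_smallo_power_imp_bigo_power_Suc:
  "poly q \<in> o[at_right 0](\<lambda>x. x ^ n) \<Longrightarrow> poly q \<in> O[at_right 0](\<lambda>x::real. x ^ Suc n)"
proof (induction n arbitrary: q)
  case 0
  then obtain q' where q: "poly q = (\<lambda>x. x * poly q' x)"
    by (auto elim: poly_factor_ident_if_smallo_1)
  from landau_o.big.mult_left[OF poly_bigo_1_at_right_0[of q'], of "\<lambda>x. x"]
  show ?case by (simp add: q)
next
  case (Suc n)
  then have "poly q \<in> o[at_right 0](\<lambda>x. x ^ 0)"
    by (intro smallo_power_mono_at_right_0[OF _ Suc.prems]) simp
  then obtain q' where q: "poly q = (\<lambda>x. x * poly q' x)"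
    by (auto elim: poly_factor_ident_if_smallo_1)
  have "(\<lambda>x. x * poly q' x) \<in> o[at_right 0](\<lambda>x. x * x ^ n)"
    using Suc.prems by (simp add: q)
  moreover have "eventually (\<lambda>x::real. x \<noteq> 0) (at_right 0)"
    by (rule eventually_at_right_less[THEN eventually_mono]) simp
  ultimately have "poly q' \<in> o[at_right 0](\<lambda>x. x ^ n)"
    by (subst (asm) landau_o.small.mult_cancel_left) simp_all
  from landau_o.big.mult_left[OF Suc.IH[OF this], of "\<lambda>x. x"]
  show ?case by (simp add: q)
qed

lemma has_poly_expansion_imp_bigo_power:
  assumes f: "has_poly_expansion n f" and f_smallo: "0 < n \<Longrightarrow> f \<in> o[at_right 0](\<lambda>x. x ^ (n - 1))"
  shows "f \<in> O[at_right 0](\<lambda>x. x ^ n)"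
proof -
  from f obtain q where q: "(\<lambda>x. f x - poly q x) \<in> o[at_right 0](\<lambda>x. x ^ n)"
    unfolding has_poly_expansion_def by blast
  have "poly q \<in> O[at_right 0](\<lambda>x. x ^ n)"
  proof (cases n)
    case 0
    then show ?thesis using poly_bigo_1_at_right_0 by simp
  next
    case (Suc m)
    have "f \<in> o[at_right 0](\<lambda>x. x ^ m)"
      using f_smallo Suc by simp
    moreover have "(\<lambda>x. f x - poly q x) \<in> o[at_right 0](\<lambda>x. x ^ m)"
      by (rule smallo_power_mono_at_right_0[OF _ q]) (simp add: Suc)
    ultimately have "(\<lambda>x. f x - (f x - poly q x)) \<in> o[at_right 0](\<lambda>x. x ^ m)"
      by (rule sum_in_smallo(2))
    then show ?thesis
      using poly_smallo_power_imp_bigo_power_Suc Suc by simp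
  qed
  from sum_in_bigo(1)[OF landau_o.small_imp_big[OF q] this] show ?thesis
    by simp
qed

lemma poly_minus_truncation_bigo:
  "(\<lambda>x::real. poly q x - (\<Sum>i\<le>n. coeff q i * x ^ i)) \<in> O[at_right 0](\<lambda>x. x ^ Suc n)"
proof -
  have "poly q x = (\<Sum>i\<le>n + degree q. coeff q i * x ^ i)" for x :: real
    using arg_cong[OF poly_as_sum_of_monoms'[of q "n + degree q"], of "\<lambda>p. poly p x"]
    by (simp add: poly_sum poly_monom)
  then have "(\<lambda>x::real. poly q x - (\<Sum>i\<le>n. coeff q i * x ^ i))
      = (\<lambda>x. \<Sum>i = Suc n..n + degree q. coeff q i * x ^ i)"
    by (simp add: sum_up_index_split)
  moreover have "(\<lambda>x::real. coeff q i * x ^ i) \<in> O[at_right 0](\<lambda>x. x ^ Suc n)"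
    if "i \<in> {Suc n..n + degree q}" for i
  proof -
    have "(\<lambda>x::real. x ^ i * coeff q i) \<in> O[at_right 0](\<lambda>x. x ^ Suc n)"
      using that by (intro landau_o.big_1_mult' bigo_const power_bigo_power_at_right_0) simp
    then show ?thesis by (simp only: mult.commute)
  qed
  ultimately show ?thesis
    by (simp only:) (rule big_sum_in_bigo)
qed

lemma has_poly_expansion_iff_coeffs:
  "has_poly_expansion n f \<longleftrightarrow>
     (\<exists>c. (\<lambda>x. f x - (\<Sum>i\<le>n. c i * x ^ i)) \<in> o[at_right 0](\<lambda>x. x ^ n))"
proof
  assume "has_poly_expansion n f"
  then obtain q where q: "(\<lambda>x. f x - poly q x) \<in> o[at_right 0](\<lambda>x. x ^ n)"
    unfolding has_poly_expansion_def by blast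
  have "(\<lambda>x. poly q x - (\<Sum>i\<le>n. coeff q i * x ^ i)) \<in> o[at_right 0](\<lambda>x. x ^ n)"
    using landau_o.big_small_trans[OF poly_minus_truncation_bigo power_Suc_smallo_power_at_right_0] .
  from sum_in_smallo(1)[OF q this]
  show "\<exists>c. (\<lambda>x. f x - (\<Sum>i\<le>n. c i * x ^ i)) \<in> o[at_right 0](\<lambda>x. x ^ n)"
    by (intro exI[of _ "coeff q"]) simp
next
  assume "\<exists>c. (\<lambda>x. f x - (\<Sum>i\<le>n. c i * x ^ i)) \<in> o[at_right 0](\<lambda>x. x ^ n)"
  then obtain c where "(\<lambda>x. f x - (\<Sum>i\<le>n. c i * x ^ i)) \<in> o[at_right 0](\<lambda>x. x ^ n)"
    by blast
  then have "has_poly_expansion n (\<lambda>x. (f x - (\<Sum>i\<le>n. c i * x ^ i)) + (\<Sum>i\<le>n. c i * x ^ i))"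
    by (intro has_poly_expansion_add has_poly_expansion_smallo has_poly_expansion_sum
        has_poly_expansion_mult has_poly_expansion_const has_poly_expansion_power
        has_poly_expansion_ident)
  then show "has_poly_expansion n f"
    by simp
qed

section \<open>Damped moments of a probability measure on \<open>[0,\<infinity>)\<close>\<close>

lemma integral_dominated_convergence_at_right_0:
  fixes s :: "real \<Rightarrow> 'a \<Rightarrow> real" and w f :: "'a \<Rightarrow> real"
  assumes "f \<in> borel_measurable M" and "\<And>t. s t \<in> borel_measurable M" and "integrable M w"
    and lim: "AE \<xi> in M. ((\<lambda>t. s t \<xi>) \<longlongrightarrow> f \<xi>) (at_right 0)"
    and bound: "\<forall>\<^sub>F t in at_right 0. AE \<xi> in M. norm (s t \<xi>) \<le> w \<xi>"
  shows "((\<lambda>t. \<integral>\<xi>. s t \<xi> \<partial>M) \<longlongrightarrow> \<integral>\<xi>. f \<xi> \<partial>M) (at_right 0)"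
proof -
  have "((\<lambda>t. \<integral>\<xi>. s (inverse t) \<xi> \<partial>M) \<longlongrightarrow> \<integral>\<xi>. f \<xi> \<partial>M) at_top"
  proof (rule integral_dominated_convergence_at_top[where w = w])
    show "AE \<xi> in M. ((\<lambda>t. s (inverse t) \<xi>) \<longlongrightarrow> f \<xi>) at_top"
      using lim by eventually_elim (simp add: filterlim_at_top_to_right)
    show "\<forall>\<^sub>F t in at_top. AE \<xi> in M. norm (s (inverse t) \<xi>) \<le> w \<xi>"
      using bound by (simp add: eventually_at_top_to_right)
  qed (use assms in auto)
  then show ?thesis
    by (simp add: filterlim_at_top_to_right)
qed

locale nonneg_prob_space = prob_space M for M :: "real measure" +
  assumes sets_eq_borel: "sets M = sets borel"
    and AE_nonneg: "AE \<xi> in M. 0 \<le> \<xi>"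
begin

lemmas [measurable_cong] = sets_eq_borel

definition damped_moment :: "nat \<Rightarrow> real \<Rightarrow> real" where
  "damped_moment j x = (\<integral>\<xi>. \<xi> ^ j / (1 + x * \<xi>) \<partial>M)"

lemma moment_finite_iff_integrable: "moment M p < \<infinity> \<longleftrightarrow> integrable M (\<lambda>\<xi>. \<xi> ^ p)"
proof -
  have "(\<integral>\<^sup>+\<xi>. ennreal (norm (\<xi> ^ p)) \<partial>M) = moment M p"
    unfolding moment_def by (rule nn_integral_cong_AE) (use AE_nonneg in \<open>eventually_elim, simp\<close>)
  moreover have "(\<lambda>\<xi>. \<xi> ^ p) \<in> borel_measurable M"
    by measurable
  ultimately show ?thesis
    by (simp add: integrable_iff_bounded)
qed

lemma integrable_power_le:
  assumes "integrable M (\<lambda>\<xi>. \<xi> ^ p)" and "k \<le> p"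
  shows "integrable M (\<lambda>\<xi>. \<xi> ^ k)"
proof (rule Bochner_Integration.integrable_bound)
  show "integrable M (\<lambda>\<xi>. 1 + \<xi> ^ p)"
    using assms(1) by simp
  show "(\<lambda>\<xi>. \<xi> ^ k) \<in> borel_measurable M"
    by measurable
  show "AE \<xi> in M. norm (\<xi> ^ k) \<le> norm (1 + \<xi> ^ p)"
    using AE_nonneg
  proof eventually_elim
    case (elim \<xi>)
    have "\<xi> ^ k \<le> 1 + \<xi> ^ p"
    proof (cases "\<xi> \<le> 1")
      case True
      then have "\<xi> ^ k \<le> 1" using elim by (simp add: power_le_one)
      then show ?thesis using zero_le_power[of \<xi> p] elim by linarith
    next
      case False
      then have "\<xi> ^ k \<le> \<xi> ^ p" by (intro power_increasing assms(2)) simp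
      then show ?thesis by simp
    qed
    then show ?case using elim by simp
  qed
qed

lemma integrable_damped_power:
  assumes x: "0 < x" and "integrable M (\<lambda>\<xi>. \<xi> ^ k)"
  shows "integrable M (\<lambda>\<xi>. \<xi> ^ Suc k / (1 + x * \<xi>))"
proof (rule Bochner_Integration.integrable_bound)
  show "integrable M (\<lambda>\<xi>. \<xi> ^ k / x)"
    using assms(2) by simp
  show "(\<lambda>\<xi>. \<xi> ^ Suc k / (1 + x * \<xi>)) \<in> borel_measurable M"
    by measurable
  show "AE \<xi> in M. norm (\<xi> ^ Suc k / (1 + x * \<xi>)) \<le> norm (\<xi> ^ k / x)"
    using AE_nonneg
  proof eventually_elim
    case (elim \<xi>)
    have "0 < 1 + x * \<xi>" using elim x by (simp add: add_pos_nonneg)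
    moreover have "\<xi> ^ Suc k * x \<le> \<xi> ^ k * (1 + x * \<xi>)" using elim x by (simp add: algebra_simps)
    ultimately show ?case using elim x by (simp add: divide_simps algebra_simps)
  qed
qed

lemma damped_moment_Suc:
  assumes x: "0 < x" and int: "integrable M (\<lambda>\<xi>. \<xi> ^ Suc k)"
  shows "damped_moment (Suc k) x = expectation (\<lambda>\<xi>. \<xi> ^ Suc k) - x * damped_moment (Suc (Suc k)) x"
proof -
  have "damped_moment (Suc k) x = (\<integral>\<xi>. \<xi> ^ Suc k - x * (\<xi> ^ Suc (Suc k) / (1 + x * \<xi>)) \<partial>M)"
    unfolding damped_moment_def
  proof (rule integral_cong_AE)
    show "AE \<xi> in M. \<xi> ^ Suc k / (1 + x * \<xi>) = \<xi> ^ Suc k - x * (\<xi> ^ Suc (Suc k) / (1 + x * \<xi>))"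
      using AE_nonneg
    proof eventually_elim
      case (elim \<xi>)
      then have "1 + x * \<xi> \<noteq> 0" using x by (smt (verit) mult_nonneg_nonneg)
      then show ?case by (simp add: field_simps)
    qed
  qed (measurable, measurable)
  also have "\<dots> = expectation (\<lambda>\<xi>. \<xi> ^ Suc k) - x * damped_moment (Suc (Suc k)) x"
    unfolding damped_moment_def
    by (subst Bochner_Integration.integral_diff[OF int integrable_mult_right[OF integrable_damped_power[OF x int]]])
      (simp only: integral_mult_right_zero)
  finally show ?thesis .
qed

lemma damped_moment_1_eq:
  assumes x: "0 < x" and int: "\<forall>k\<le>n. integrable M (\<lambda>\<xi>. \<xi> ^ k)"
  shows "damped_moment 1 x
    = (\<Sum>k<n. (- x) ^ k * expectation (\<lambda>\<xi>. \<xi> ^ Suc k)) + (- x) ^ n * damped_moment (Suc n) x"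
  using int
proof (induction n)
  case (Suc n)
  then have IH: "damped_moment 1 x
    = (\<Sum>k<n. (- x) ^ k * expectation (\<lambda>\<xi>. \<xi> ^ Suc k)) + (- x) ^ n * damped_moment (Suc n) x"
    by simp
  have "integrable M (\<lambda>\<xi>. \<xi> ^ Suc n)"
    using Suc.prems by blast
  then have step: "damped_moment (Suc n) x
    = expectation (\<lambda>\<xi>. \<xi> ^ Suc n) - x * damped_moment (Suc (Suc n)) x"
    by (rule damped_moment_Suc[OF x])
  show ?case
    by (simp only: IH step) (simp add: algebra_simps)
qed simp


lemma damped_moment_tendsto_expectation:
  assumes int: "integrable M (\<lambda>\<xi>. \<xi> ^ p)"
  shows "(damped_moment p \<longlongrightarrow> expectation (\<lambda>\<xi>. \<xi> ^ p)) (at_right 0)"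
  unfolding damped_moment_def[abs_def]
proof (rule integral_dominated_convergence_at_right_0[where w = "\<lambda>\<xi>. \<xi> ^ p"])
  show "AE \<xi> in M. ((\<lambda>t. \<xi> ^ p / (1 + t * \<xi>)) \<longlongrightarrow> \<xi> ^ p) (at_right 0)"
  proof (rule AE_I2)
    fix \<xi> :: real
    have "((\<lambda>t. \<xi> ^ p / (1 + t * \<xi>)) \<longlongrightarrow> \<xi> ^ p / (1 + 0 * \<xi>)) (at_right 0)"
      by (intro tendsto_intros tendsto_ident_at) simp
    then show "((\<lambda>t. \<xi> ^ p / (1 + t * \<xi>)) \<longlongrightarrow> \<xi> ^ p) (at_right 0)"
      by simp
  qed
  show "\<forall>\<^sub>F t in at_right 0. AE \<xi> in M. norm (\<xi> ^ p / (1 + t * \<xi>)) \<le> \<xi> ^ p"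
    using eventually_at_right_less[of 0]
  proof eventually_elim
    case (elim t)
    show ?case
      using AE_nonneg
    proof eventually_elim
      case (elim \<xi>)
      have "1 \<le> 1 + t * \<xi>"
        using elim \<open>0 < t\<close> by simp
      then show ?case
        using elim by (simp add: divide_le_eq mult_le_cancel_left1)
    qed
  qed
qed (use int in simp_all)

lemma mult_damped_moment_tendsto_0:
  assumes int: "integrable M (\<lambda>\<xi>. \<xi> ^ j)"
  shows "((\<lambda>x. x * damped_moment (Suc j) x) \<longlongrightarrow> 0) (at_right 0)"
proof -
  have "((\<lambda>x. \<integral>\<xi>. x * (\<xi> ^ Suc j / (1 + x * \<xi>)) \<partial>M) \<longlongrightarrow> \<integral>\<xi>. 0 \<partial>M) (at_right 0)"
  proof (rule integral_dominated_convergence_at_right_0[where w = "\<lambda>\<xi>. \<xi> ^ j"])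
    show "AE \<xi> in M. ((\<lambda>t. t * (\<xi> ^ Suc j / (1 + t * \<xi>))) \<longlongrightarrow> 0) (at_right 0)"
    proof (rule AE_I2)
      fix \<xi> :: real
      have "((\<lambda>t. t * (\<xi> ^ Suc j / (1 + t * \<xi>))) \<longlongrightarrow> 0 * (\<xi> ^ Suc j / (1 + 0 * \<xi>))) (at_right 0)"
        by (intro tendsto_intros tendsto_ident_at) simp
      then show "((\<lambda>t. t * (\<xi> ^ Suc j / (1 + t * \<xi>))) \<longlongrightarrow> 0) (at_right 0)"
        by simp
    qed
    show "\<forall>\<^sub>F t in at_right 0. AE \<xi> in M. norm (t * (\<xi> ^ Suc j / (1 + t * \<xi>))) \<le> \<xi> ^ j"
      using eventually_at_right_less[of 0]
    proof eventually_elim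
      case (elim t)
      show ?case
        using AE_nonneg
      proof eventually_elim
        case (elim \<xi>)
        have "t * \<xi> ^ Suc j \<le> \<xi> ^ j * (1 + t * \<xi>)"
          using elim \<open>0 < t\<close> by (simp add: algebra_simps)
        moreover have "0 < 1 + t * \<xi>"
          using elim \<open>0 < t\<close> by (simp add: add_pos_nonneg)
        ultimately show ?case
          using elim \<open>0 < t\<close> by (simp add: divide_simps)
      qed
    qed
  qed (use int in simp_all)
  then show ?thesis
    unfolding damped_moment_def by (simp only: integral_mult_right_zero) simp
qed

lemma integrable_power_Suc_if_damped_moment_bigo_1:
  assumes int: "integrable M (\<lambda>\<xi>. \<xi> ^ j)"
    and bounded: "damped_moment (Suc j) \<in> O[at_right 0](\<lambda>_. 1)"
  shows "integrable M (\<lambda>\<xi>. \<xi> ^ Suc j)"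
proof -
  from bounded obtain c where "eventually (\<lambda>x. norm (damped_moment (Suc j) x) \<le> c * norm (1::real))
      (at_right 0)"
    by (elim landau_o.bigE)
  moreover define t where "t n = inverse (real (Suc n))" for n
  have t_pos: "0 < t n" for n
    by (simp add: t_def)
  have "filterlim t (at_right 0) sequentially"
    unfolding t_def
    by (intro tendsto_imp_filterlim_at_right LIMSEQ_inverse_real_of_nat) simp
  ultimately have t_bound: "eventually (\<lambda>n. damped_moment (Suc j) (t n) \<le> c) sequentially"
    by (rule eventually_compose_filterlim[THEN eventually_mono]) simp
  \<comment> \<open>Fatou's lemma along the sequence \<open>t\<close>\<close>
  define u where "u n \<xi> = ennreal (\<xi> ^ Suc j / (1 + t n * \<xi>))" for n \<xi>
  have "(\<integral>\<^sup>+\<xi>. ennreal (norm (\<xi> ^ Suc j)) \<partial>M) = (\<integral>\<^sup>+\<xi>. liminf (\<lambda>n. u n \<xi>) \<partial>M)"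
  proof (rule nn_integral_cong_AE)
    show "AE \<xi> in M. ennreal (norm (\<xi> ^ Suc j)) = liminf (\<lambda>n. u n \<xi>)"
      using AE_nonneg
    proof eventually_elim
      case (elim \<xi>)
      have "(\<lambda>n. \<xi> ^ Suc j / (1 + t n * \<xi>)) \<longlonglongrightarrow> \<xi> ^ Suc j / (1 + 0 * \<xi>)"
        unfolding t_def by (intro tendsto_intros LIMSEQ_inverse_real_of_nat) simp
      then have "(\<lambda>n. u n \<xi>) \<longlonglongrightarrow> ennreal (\<xi> ^ Suc j)"
        unfolding u_def by (intro tendsto_ennrealI) simp
      then show ?case
        using elim by (simp add: lim_imp_Liminf)
    qed
  qed
  also have "\<dots> \<le> liminf (\<lambda>n. integral\<^sup>N M (u n))"
    by (rule nn_integral_liminf) (simp add: u_def)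
  also have "\<dots> \<le> liminf (\<lambda>n. ennreal c)"
    using t_bound
  proof (intro Liminf_mono, eventually_elim)
    case (elim n)
    have "integral\<^sup>N M (u n) = ennreal (damped_moment (Suc j) (t n))"
      unfolding u_def damped_moment_def
      using AE_nonneg integrable_damped_power[OF t_pos int]
      by (intro nn_integral_eq_integral) (auto intro: AE_mp[OF _ AE_I2] simp: t_pos less_imp_le)
    then show ?case
      using elim by (simp add: ennreal_leI)
  qed
  finally have "(\<integral>\<^sup>+\<xi>. ennreal (norm (\<xi> ^ Suc j)) \<partial>M) < \<infinity>"
    by (simp add: Liminf_const le_less_trans)
  then show ?thesis
    by (simp add: integrable_iff_bounded)
qed

lemma mult_damped_moment_1_less_1:
  assumes x: "0 < x"
  shows "x * damped_moment 1 x < 1"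
proof -
  have "x * damped_moment 1 x = (\<integral>\<xi>. x * (\<xi> / (1 + x * \<xi>)) \<partial>M)"
    unfolding damped_moment_def by (simp only: power_one_right integral_mult_right_zero)
  also have "\<dots> < (\<integral>\<xi>. 1 \<partial>M)"
  proof (rule integral_less_AE_space)
    show "integrable M (\<lambda>\<xi>. x * (\<xi> / (1 + x * \<xi>)))"
      using integrable_mult_right[OF integrable_damped_power[OF x, of 0], of x] by simp
    show "AE \<xi> in M. x * (\<xi> / (1 + x * \<xi>)) < 1"
      using AE_nonneg
    proof eventually_elim
      case (elim \<xi>)
      then have "0 < 1 + x * \<xi>"
        using x by (simp add: add_pos_nonneg)
      then show ?case
        by (simp add: divide_simps)
    qed
  qed (simp_all add: emeasure_space_1)
  finally show ?thesis
    by (simp add: prob_space)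
qed

lemma K_mu_minus_eq:
  assumes x: "0 < x"
  shows "complex_of_real (1 / x) * K_mu M (- complex_of_real x)
    = complex_of_real (- damped_moment 1 x / (1 - x * damped_moment 1 x))"
proof -
  define C where "C = damped_moment 1 x"
  have integrand: "(- complex_of_real x) * complex_of_real \<xi> / (1 - (- complex_of_real x) * complex_of_real \<xi>)
      = complex_of_real (- (x * (\<xi> ^ 1 / (1 + x * \<xi>))))" for \<xi>
    by (simp only: of_real_minus of_real_mult of_real_divide of_real_add of_real_1 power_one_right
        mult_minus_left diff_minus_eq_add minus_minus times_divide_eq_right minus_divide_left)
  have "psi_mu M (- complex_of_real x) = complex_of_real (- (x * C))"
    unfolding psi_mu_def C_def damped_moment_def
    by (simp only: integrand integral_complex_of_real integral_minus integral_mult_right_zero)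
  then have "K_mu M (- complex_of_real x) = complex_of_real (- (x * C) / (1 + - (x * C)))"
    unfolding K_mu_def by (simp only: of_real_divide of_real_add of_real_1)
  moreover have "1 - x * C \<noteq> 0"
    using mult_damped_moment_1_less_1[OF x] by (simp add: C_def)
  then have "1 / x * (- (x * C) / (1 + - (x * C))) = - C / (1 - x * C)"
    using x by (simp add: field_simps)
  ultimately show ?thesis
    unfolding C_def[symmetric] by (simp only: of_real_mult[symmetric])
qed

lemma has_poly_expansion_damped_moment_1:
  assumes int: "integrable M (\<lambda>\<xi>. \<xi> ^ Suc n)"
  shows "has_poly_expansion n (damped_moment 1)"
proof -
  define m where "m k = expectation (\<lambda>\<xi>. \<xi> ^ k)" for k
  have "((\<lambda>x. (damped_moment (Suc n) x - m (Suc n)) / 1) \<longlongrightarrow> 0) (at_right 0)"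
    using tendsto_diff[OF damped_moment_tendsto_expectation[OF int] tendsto_const[of "m (Suc n)"]]
    by (simp add: m_def)
  then have "(\<lambda>x. damped_moment (Suc n) x - m (Suc n)) \<in> o[at_right 0](\<lambda>_. 1)"
    by (rule smalloI_tendsto) simp
  moreover have "(\<lambda>x::real. (- x) ^ n) \<in> O[at_right 0](\<lambda>x. x ^ n)"
    by (rule bigoI[of _ 1]) (simp add: norm_power)
  ultimately have "(\<lambda>x. (- x) ^ n * (damped_moment (Suc n) x - m (Suc n)))
      \<in> o[at_right 0](\<lambda>x. x ^ n * 1)"
    by (rule landau_o.big_small_mult[rotated])
  then have remainder: "has_poly_expansion n (\<lambda>x. (- x) ^ n * (damped_moment (Suc n) x - m (Suc n)))"
    by (intro has_poly_expansion_smallo) simp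
  have "has_poly_expansion n (\<lambda>x. (\<Sum>k<n. (- x) ^ k * m (Suc k)) + (- x) ^ n * m (Suc n))"
    by (intro has_poly_expansion_add has_poly_expansion_sum has_poly_expansion_mult
        has_poly_expansion_power has_poly_expansion_uminus has_poly_expansion_ident
        has_poly_expansion_const)
  from has_poly_expansion_add[OF this remainder]
  have "has_poly_expansion n (\<lambda>x. (\<Sum>k<n. (- x) ^ k * m (Suc k)) + (- x) ^ n * m (Suc n)
      + (- x) ^ n * (damped_moment (Suc n) x - m (Suc n)))" .
  moreover have "eventually (\<lambda>x. (\<Sum>k<n. (- x) ^ k * m (Suc k)) + (- x) ^ n * m (Suc n)
      + (- x) ^ n * (damped_moment (Suc n) x - m (Suc n)) = damped_moment 1 x) (at_right 0)"
    using eventually_at_right_less[of 0]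
  proof eventually_elim
    case (elim x)
    have "\<forall>k\<le>n. integrable M (\<lambda>\<xi>. \<xi> ^ k)"
      using integrable_power_le[OF int] by simp
    from damped_moment_1_eq[OF elim this] show ?case
      by (simp add: m_def algebra_simps)
  qed
  ultimately show ?thesis
    by (rule has_poly_expansion_cong[rotated])
qed

lemma integrable_power_if_has_poly_expansion:
  assumes expansion: "has_poly_expansion n (damped_moment 1)" and "k \<le> Suc n"
  shows "integrable M (\<lambda>\<xi>. \<xi> ^ k)"
  using assms(2)
proof (induction k rule: less_induct)
  case (less k)
  show ?case
  proof (cases k)
    case (Suc j)
    have int_le: "\<forall>i\<le>j. integrable M (\<lambda>\<xi>. \<xi> ^ i)"
      using less Suc by auto
    have "has_poly_expansion j (\<lambda>x. (- 1) ^ j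
        * (damped_moment 1 x - (\<Sum>k<j. (- x) ^ k * expectation (\<lambda>\<xi>. \<xi> ^ Suc k))))"
      using less.prems Suc
      by (intro has_poly_expansion_mult has_poly_expansion_const has_poly_expansion_diff
          has_poly_expansion_mono[OF _ expansion] has_poly_expansion_sum has_poly_expansion_power
          has_poly_expansion_uminus has_poly_expansion_ident) simp_all
    moreover have "eventually (\<lambda>x. (- 1) ^ j
        * (damped_moment 1 x - (\<Sum>k<j. (- x) ^ k * expectation (\<lambda>\<xi>. \<xi> ^ Suc k)))
        = x ^ j * damped_moment (Suc j) x) (at_right 0)"
      using eventually_at_right_less[of 0]
    proof eventually_elim
      case (elim x)
      show ?case
        unfolding damped_moment_1_eq[OF elim int_le] by (simp add: power_minus[of x j] mult.assoc)
    qed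
    ultimately have "has_poly_expansion j (\<lambda>x. x ^ j * damped_moment (Suc j) x)"
      by (rule has_poly_expansion_cong[rotated])
    moreover have "(\<lambda>x. x ^ j * damped_moment (Suc j) x) \<in> o[at_right 0](\<lambda>x. x ^ (j - 1))"
      if "0 < j"
    proof -
      have "((\<lambda>x. x * damped_moment (Suc j) x / 1) \<longlongrightarrow> 0) (at_right 0)"
        using mult_damped_moment_tendsto_0 int_le by simp
      then have "(\<lambda>x. x * damped_moment (Suc j) x) \<in> o[at_right 0](\<lambda>_. 1)"
        by (rule smalloI_tendsto) simp
      from landau_o.small.mult_left[OF this, of "\<lambda>x. x ^ (j - 1)"] that show ?thesis
        by (simp add: power_eq_if[of _ j] mult_ac)
    qed
    ultimately have "(\<lambda>x. x ^ j * damped_moment (Suc j) x) \<in> O[at_right 0](\<lambda>x. x ^ j * 1)"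
      using has_poly_expansion_imp_bigo_power by simp
    moreover have "eventually (\<lambda>x::real. x ^ j \<noteq> 0) (at_right 0)"
      using eventually_at_right_less[of 0] by eventually_elim simp
    ultimately have "damped_moment (Suc j) \<in> O[at_right 0](\<lambda>_. 1)"
      by (subst (asm) landau_o.big.mult_cancel_left) simp_all
    then show ?thesis
      using integrable_power_Suc_if_damped_moment_bigo_1 int_le Suc by simp
  qed simp
qed

lemma moment_finite_iff_has_poly_expansion:
  "moment M (Suc n) < \<infinity> \<longleftrightarrow> has_poly_expansion n (damped_moment 1)"
  unfolding moment_finite_iff_integrable
  using has_poly_expansion_damped_moment_1[of n] integrable_power_if_has_poly_expansion[of n "Suc n"]
  by blast

lemma K_mu_expansion_smallo_iff:
  "(\<lambda>x. complex_of_real (1 / x) * K_mu M (- complex_of_real x)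
      - (\<Sum>k=1..Suc n. complex_of_real ((-1) ^ k * r k * x ^ (k - 1))))
     \<in> o[at_right 0](\<lambda>x. complex_of_real (x ^ n))
   \<longleftrightarrow> (\<lambda>x. - damped_moment 1 x / (1 - x * damped_moment 1 x)
      - (\<Sum>i\<le>n. (- 1) ^ Suc i * r (Suc i) * x ^ i)) \<in> o[at_right 0](\<lambda>x. x ^ n)"
proof -
  have shift: "(\<Sum>k=1..Suc n. complex_of_real ((-1) ^ k * r k * x ^ (k - 1)))
      = complex_of_real (\<Sum>i\<le>n. (- 1) ^ Suc i * r (Suc i) * x ^ i)" for x
    by (simp only: of_real_sum One_nat_def sum.shift_bounds_cl_Suc_ivl atLeast0AtMost diff_Suc_Suc
        minus_nat.diff_0)
  have "eventually (\<lambda>x. complex_of_real (1 / x) * K_mu M (- complex_of_real x)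
      - (\<Sum>k=1..Suc n. complex_of_real ((-1) ^ k * r k * x ^ (k - 1)))
      = complex_of_real (- damped_moment 1 x / (1 - x * damped_moment 1 x)
      - (\<Sum>i\<le>n. (- 1) ^ Suc i * r (Suc i) * x ^ i))) (at_right 0)"
    using eventually_at_right_less[of 0]
    by eventually_elim (simp only: K_mu_minus_eq shift of_real_diff)
  from landau_o.small.in_cong[OF this] show ?thesis
    by (simp only: landau_o.small.of_real_iff)
qed

end

lemma ex_alternating_shift_iff:
  "(\<exists>r. P (\<lambda>i. (- 1) ^ Suc i * r (Suc i))) \<longleftrightarrow> (\<exists>c :: nat \<Rightarrow> real. P c)"
proof
  assume "\<exists>c. P c"
  then obtain c where "P c" ..
  moreover have "(\<lambda>i. (- 1) ^ Suc i * ((- 1) ^ Suc i * c (Suc i - 1))) = c"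
    by simp
  ultimately show "\<exists>r. P (\<lambda>i. (- 1) ^ Suc i * r (Suc i))"
    by (intro exI[of _ "\<lambda>k. (- 1) ^ k * c (k - 1)"]) simp
next
  assume "\<exists>r. P (\<lambda>i. (- 1) ^ Suc i * r (Suc i))"
  then obtain r where "P (\<lambda>i. (- 1) ^ Suc i * r (Suc i))" ..
  then show "\<exists>c. P c"
    by (rule exI[where P = P])
qed

theorem proposition4p1:
  fixes M :: "real measure" and p :: nat
  assumes "prob_space M"
    and "sets M = sets borel"
    and "AE x in M. 0 \<le> x"
    and "measure M {0} < 1"
    and "p \<ge> 1"
  shows "moment M p < \<infinity> \<longleftrightarrow>
    (\<exists>r :: nat \<Rightarrow> real.
       (\<lambda>x::real. complex_of_real (1 / x) * K_mu M (- complex_of_real x)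
          - (\<Sum>k=1..p. complex_of_real ((-1) ^ k * r k * x ^ (k - 1))))
       \<in> o[at_right 0](\<lambda>x. complex_of_real (x ^ (p - 1))))"
proof -
  interpret nonneg_prob_space M
    using assms(1-3) by (simp add: nonneg_prob_space_def nonneg_prob_space_axioms_def)
  obtain n where p: "p = Suc n"
    using assms(5) by (cases p) auto
  have "eventually (\<lambda>x. x * damped_moment 1 x \<noteq> 1) (at_right 0)"
    using eventually_at_right_less[of 0]
  proof eventually_elim
    case (elim x)
    then show ?case
      using mult_damped_moment_1_less_1[OF elim] by simp
  qed
  then have "moment M p < \<infinity>
      \<longleftrightarrow> has_poly_expansion n (\<lambda>x. - damped_moment 1 x / (1 - x * damped_moment 1 x))"
    unfolding p moment_finite_iff_has_poly_expansion by (rule has_poly_expansion_moebius_iff[symmetric])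
  also have "\<dots> \<longleftrightarrow> (\<exists>c. (\<lambda>x. - damped_moment 1 x / (1 - x * damped_moment 1 x)
      - (\<Sum>i\<le>n. c i * x ^ i)) \<in> o[at_right 0](\<lambda>x. x ^ n))"
    by (rule has_poly_expansion_iff_coeffs)
  also have "\<dots> \<longleftrightarrow> (\<exists>r. (\<lambda>x. - damped_moment 1 x / (1 - x * damped_moment 1 x)
      - (\<Sum>i\<le>n. (- 1) ^ Suc i * r (Suc i) * x ^ i)) \<in> o[at_right 0](\<lambda>x. x ^ n))"
    by (rule ex_alternating_shift_iff[symmetric])
  finally show ?thesis
    by (simp only: p diff_Suc_1 K_mu_expansion_smallo_iff)
qed

end
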